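(* Let $G$ be a finite group such that, for some prime $p$, the center $Z(G)$ is a nontrivial $p$-group and, for every element $x\in G$ of order $p$, the centralizer $C_G(x)$ is not a $p$-group. Then the cyclic graph $\Delta(G)$ is connected and $\mathrm{diam}(\Delta(G))\le 6$.
   Context: For a finite group $G$, the cyclic graph $\Delta(G)$ has vertex set $G^{\#}=G\setminus\{1\}$, and distinct vertices $x,y$ are adjacent if and only if the subgroup $\langle x,y\rangle$ is cyclic. The diameter is the maximum graph distance between two vertices. *)

theory Defs
  imports "HOL-Algebra.Algebra"
begin

definition group_center :: "('a, 'b) monoid_scheme \<Rightarrow> 'a set" where
  "group_center G = {z \<in> carrier G. \<forall>g \<in> carrier G. z \<otimes>\<^bsub>G\<^esub> g = g \<otimes>\<^bsub>G\<^esub> z}"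

definition group_centralizer :: "('a, 'b) monoid_scheme \<Rightarrow> 'a \<Rightarrow> 'a set" where
  "group_centralizer G x = {g \<in> carrier G. g \<otimes>\<^bsub>G\<^esub> x = x \<otimes>\<^bsub>G\<^esub> g}"

definition is_p_group_set :: "nat \<Rightarrow> 'a set \<Rightarrow> bool" where
  "is_p_group_set p H \<longleftrightarrow> finite H \<and> (\<exists>k. card H = p ^ k)"

definition cyc_vertices :: "('a, 'b) monoid_scheme \<Rightarrow> 'a set" where
  "cyc_vertices G = carrier G - {\<one>\<^bsub>G\<^esub>}"

definition cyc_adj :: "('a, 'b) monoid_scheme \<Rightarrow> 'a \<Rightarrow> 'a \<Rightarrow> bool" where
  "cyc_adj G x y \<longleftrightarrow> x \<in> cyc_vertices G \<and> y \<in> cyc_vertices G \<and> x \<noteq> y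
     \<and> cyclic_group (subgroup_generated G {x, y})"

definition cyc_walk :: "('a, 'b) monoid_scheme \<Rightarrow> 'a list \<Rightarrow> bool" where
  "cyc_walk G xs \<longleftrightarrow> xs \<noteq> [] \<and> set xs \<subseteq> cyc_vertices G
     \<and> (\<forall>i. Suc i < length xs \<longrightarrow> cyc_adj G (xs ! i) (xs ! Suc i))"

text \<open>Graph distance at most n: a walk with at most n edges from x to y.\<close>
definition cyc_dist_le :: "('a, 'b) monoid_scheme \<Rightarrow> nat \<Rightarrow> 'a \<Rightarrow> 'a \<Rightarrow> bool" where
  "cyc_dist_le G n x y \<longleftrightarrow>
     (\<exists>xs. cyc_walk G xs \<and> hd xs = x \<and> last xs = y \<and> length xs \<le> Suc n)"

definition cyc_connected :: "('a, 'b) monoid_scheme \<Rightarrow> bool" where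
  "cyc_connected G \<longleftrightarrow> (\<forall>x \<in> cyc_vertices G. \<forall>y \<in> cyc_vertices G. \<exists>n. cyc_dist_le G n x y)"

definition cyc_diam_le :: "('a, 'b) monoid_scheme \<Rightarrow> nat \<Rightarrow> bool" where
  "cyc_diam_le G n \<longleftrightarrow> (\<forall>x \<in> cyc_vertices G. \<forall>y \<in> cyc_vertices G. cyc_dist_le G n x y)"

end

theory Submission
  imports Defs
begin

text \<open>
  Let \<open>z\<close> be a central element of order \<open>p\<close>, which exists by Cauchy's theorem applied to the
  centre. Commuting elements of coprime orders generate a cyclic group, so \<open>z\<close> is adjacent
  to every element whose order is a prime different from \<open>p\<close>. Every vertex \<open>x\<close> is adjacent
  (or equal) to a power \<open>y\<close> of prime order \<open>q\<close>. If \<open>q \<noteq> p\<close>, then \<open>y\<close> is adjacent to \<open>z\<close>;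
  if \<open>q = p\<close>, the centralizer of \<open>y\<close> is not a \<open>p\<close>-group and so contains an element \<open>w\<close> of
  prime order \<open>r \<noteq> p\<close>, giving the path \<open>x, y, w, z\<close>. Hence every vertex lies within
  distance 3 of \<open>z\<close>.
\<close>

lemma exists_prime_divisor_other_than:
  fixes n p :: nat
  assumes "Factorial_Ring.prime p" "n > 0" "\<And>k. n \<noteq> p ^ k"
  obtains r where "Factorial_Ring.prime r" "r \<noteq> p" "r dvd n"
proof -
  obtain k m where m: "\<not> p dvd m" "n = m * p ^ k"
    using prime_power_canonical[OF assms(1,2)] by blast
  then have "m \<noteq> 1" using assms(3) by (metis mult_1)
  then obtain r where "Factorial_Ring.prime r" "r dvd m" using prime_factor_nat by blast
  then show ?thesis using that m by (metis dvd_mult2)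
qed

lemma successively_iff_nth:
  "successively P xs \<longleftrightarrow> (\<forall>i. Suc i < length xs \<longrightarrow> P (xs ! i) (xs ! Suc i))"
  by (induction P xs rule: successively.induct) (auto simp: nth_Cons split: nat.split)

lemma (in group) subgroup_of_subgroup:
  assumes "subgroup H G" "subgroup S (G\<lparr>carrier := H\<rparr>)"
  shows "subgroup S G"
proof -
  have "S \<subseteq> H" using subgroup.subset[OF assms(2)] by simp
  then show ?thesis
    using assms by (auto simp: subgroup_def m_inv_consistent[OF assms(1)] subset_iff)
qed

lemma (in group) ord_dvd_card_subgroup:
  assumes "subgroup H G" "h \<in> H"
  shows "ord h dvd card H"
proof -
  interpret K: group "G\<lparr>carrier := H\<rparr>" using subgroup_imp_group[OF assms(1)] .
  have h: "h \<in> carrier G" using assms subgroup.subset by blast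
  have "generate G {h} \<subseteq> H" using generate_subgroup_incl assms by blast
  then have "subgroup (generate G {h}) (G\<lparr>carrier := H\<rparr>)"
    using subgroup_incl generate_is_subgroup h assms(1) by simp
  from K.lagrange[OF this] have "card (generate G {h}) dvd card H"
    by (metis dvd_triv_right order_def partial_object.select_convs(1) partial_object.surjective
        partial_object.update_convs(1))
  then show ?thesis using generate_pow_card[OF h] by simp
qed

lemma (in group) subgroup_exists_ord_eq_prime:
  assumes "subgroup H G" "finite H" "Factorial_Ring.prime r" "r dvd card H"
  obtains h where "h \<in> H" "ord h = r"
proof -
  interpret K: group "G\<lparr>carrier := H\<rparr>" using subgroup_imp_group[OF assms(1)] .
  have "order (G\<lparr>carrier := H\<rparr>) = r ^ 1 * (card H div r)"
    using assms(4) by (simp add: order_def)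
  moreover have "finite (carrier (G\<lparr>carrier := H\<rparr>))" using assms(2) by simp
  ultimately have "\<exists>S. subgroup S (G\<lparr>carrier := H\<rparr>) \<and> card S = r ^ 1"
    by (rule sylow_thm[OF assms(3) K.is_group])
  then obtain S where S: "subgroup S (G\<lparr>carrier := H\<rparr>)" "card S = r" by auto
  have SG: "subgroup S G" using subgroup_of_subgroup[OF assms(1) S(1)] .
  have "S \<noteq> {\<one>}" using S(2) assms(3) by auto
  then obtain h where h: "h \<in> S" "h \<noteq> \<one>" using subgroup.one_closed[OF SG] by blast
  have "ord h dvd r" using ord_dvd_card_subgroup[OF SG h(1)] S(2) by simp
  moreover have "ord h \<noteq> 1" using ord_eq_1 h SG subgroup.subset by blast
  ultimately have "ord h = r" using assms(3) prime_nat_iff by blast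
  moreover have "h \<in> H" using h(1) S(1) subgroup.subset by force
  ultimately show ?thesis using that by blast
qed

lemma (in group) p_subgroup_exists_ord_eq:
  assumes "subgroup H G" "is_p_group_set p H" "H \<noteq> {\<one>}" "Factorial_Ring.prime p"
  obtains h where "h \<in> H" "ord h = p"
proof -
  obtain k where k: "finite H" "card H = p ^ k"
    using assms(2) unfolding is_p_group_set_def by blast
  have "card H \<noteq> 1"
    using assms(3) subgroup.one_closed[OF assms(1)] by (auto simp: card_1_singleton_iff)
  then have "p dvd card H" using k(2) by (cases k) auto
  then show ?thesis using subgroup_exists_ord_eq_prime[OF assms(1) k(1) assms(4)] that by blast
qed

lemma (in group) subgroup_exists_prime_ord_ne:
  assumes "subgroup H G" "finite H" "Factorial_Ring.prime p" "\<not> is_p_group_set p H"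
  obtains h where "h \<in> H" "Factorial_Ring.prime (ord h)" "ord h \<noteq> p"
proof -
  have "card H > 0" using assms(1,2) subgroup.one_closed card_gt_0_iff by blast
  moreover have "card H \<noteq> p ^ k" for k using assms(2,4) unfolding is_p_group_set_def by blast
  ultimately obtain r where r: "Factorial_Ring.prime r" "r \<noteq> p" "r dvd card H"
    using exists_prime_divisor_other_than[OF assms(3)] by blast
  then obtain h where "h \<in> H" "ord h = r"
    using subgroup_exists_ord_eq_prime[OF assms(1,2)] by blast
  with r that show ?thesis by simp
qed

lemma (in group) subgroup_commuting_elements:
  assumes "S \<subseteq> carrier G"
  shows "subgroup {z \<in> carrier G. \<forall>g\<in>S. z \<otimes> g = g \<otimes> z} G"
proof (rule subgroupI)
  show "{z \<in> carrier G. \<forall>g\<in>S. z \<otimes> g = g \<otimes> z} \<noteq> {}"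
    using assms by (auto intro!: exI[of _ \<one>])
next
  fix a assume a: "a \<in> {z \<in> carrier G. \<forall>g\<in>S. z \<otimes> g = g \<otimes> z}"
  have "inv a \<otimes> g = g \<otimes> inv a" if g: "g \<in> S" for g
  proof -
    have g': "g \<in> carrier G" using g assms by blast
    have "inv a \<otimes> g = inv a \<otimes> (g \<otimes> a) \<otimes> inv a" using a g' by (simp add: m_assoc)
    also have "\<dots> = inv a \<otimes> (a \<otimes> g) \<otimes> inv a" using a g by simp
    also have "\<dots> = g \<otimes> inv a" using a g' by (simp add: m_assoc[symmetric])
    finally show ?thesis .
  qed
  then show "inv a \<in> {z \<in> carrier G. \<forall>g\<in>S. z \<otimes> g = g \<otimes> z}" using a by simp
next
  fix a b assume a: "a \<in> {z \<in> carrier G. \<forall>g\<in>S. z \<otimes> g = g \<otimes> z}"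
    and b: "b \<in> {z \<in> carrier G. \<forall>g\<in>S. z \<otimes> g = g \<otimes> z}"
  have "a \<otimes> b \<otimes> g = g \<otimes> (a \<otimes> b)" if g: "g \<in> S" for g
  proof -
    have g': "g \<in> carrier G" using g assms by blast
    have "a \<otimes> b \<otimes> g = a \<otimes> (g \<otimes> b)" using a b g g' by (simp add: m_assoc)
    also have "\<dots> = g \<otimes> a \<otimes> b" using a b g g' by (simp flip: m_assoc)
    finally show ?thesis using a b g' by (simp add: m_assoc)
  qed
  then show "a \<otimes> b \<in> {z \<in> carrier G. \<forall>g\<in>S. z \<otimes> g = g \<otimes> z}" using a b by simp
qed auto

lemma (in group) subgroup_group_center: "subgroup (group_center G) G"
  unfolding group_center_def using subgroup_commuting_elements by simp

lemma (in group) subgroup_group_centralizer: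
  "x \<in> carrier G \<Longrightarrow> subgroup (group_centralizer G x) G"
  unfolding group_centralizer_def using subgroup_commuting_elements[of "{x}"] by simp

lemma (in group) mem_generate_mult_if_coprime_ord:
  assumes a: "a \<in> carrier G" and b: "b \<in> carrier G" and ab: "a \<otimes> b = b \<otimes> a"
    and coprime: "coprime (ord a) (ord b)"
  shows "a \<in> generate G {a \<otimes> b}"
proof -
  have "gcd (int (ord a)) (int (ord b)) = 1"
    using coprime by (simp add: coprime_iff_gcd_eq_1 gcd_int_int_eq)
  then obtain u v :: int where uv: "u * ord a + v * ord b = 1" using bezout_int by metis
  have "int (ord a) dvd 1 - v * ord b" using uv by (metis add_diff_cancel_right' dvd_triv_right)
  then have "a [^] (v * ord b) = a [^] (1::int)" using int_pow_eq[OF a] by blast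
  moreover have "b [^] (v * ord b) = \<one>" by (simp add: int_pow_eq_id b)
  ultimately have "(a \<otimes> b) [^] (v * ord b) = a" by (simp add: int_pow_mult_distrib[OF ab a b] a)
  moreover have "(a \<otimes> b) [^] (v * ord b) \<in> generate G {a \<otimes> b}"
    using generate_pow a b by auto
  ultimately show ?thesis by simp
qed

lemma (in group) cyclic_group_subgroup_generatedI:
  assumes "S \<subseteq> carrier G" "c \<in> generate G S" "S \<subseteq> generate G {c}"
  shows "cyclic_group (subgroup_generated G S)"
proof -
  have c: "c \<in> carrier G" using assms(2) generate_incl[OF assms(1)] by blast
  have "generate G S \<subseteq> generate G {c}"
    using generate_subgroup_incl[OF assms(3) generate_is_subgroup] c by simp
  moreover have "generate G {c} \<subseteq> generate G S"
    using generate_subgroup_incl[OF _ generate_is_subgroup[OF assms(1)]] assms(2) by simp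
  ultimately have "generate G S = generate G {c}" ..
  then have "subgroup_generated G S = subgroup_generated G {c}"
    using assms(1) c unfolding subgroup_generated_def by (simp add: Int_absorb1)
  then show ?thesis using cyclic_group_generated by simp
qed

lemma (in group) cyc_adj_if_commute_coprime_ord:
  assumes a: "a \<in> cyc_vertices G" and b: "b \<in> cyc_vertices G" and "a \<noteq> b"
    and ab: "a \<otimes> b = b \<otimes> a" and coprime: "coprime (ord a) (ord b)"
  shows "cyc_adj G a b"
proof -
  have a': "a \<in> carrier G" and b': "b \<in> carrier G" using a b by (auto simp: cyc_vertices_def)
  have "a \<otimes> b \<in> generate G {a, b}" by (simp add: generate.eng generate.incl)
  moreover have "a \<in> generate G {a \<otimes> b}"
    using mem_generate_mult_if_coprime_ord[OF a' b' ab coprime] .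
  moreover have "b \<in> generate G {a \<otimes> b}"
    using mem_generate_mult_if_coprime_ord[OF b' a' ab[symmetric]] coprime
    by (simp add: ab coprime_commute)
  ultimately have "cyclic_group (subgroup_generated G {a, b})"
    using cyclic_group_subgroup_generatedI[of "{a, b}" "a \<otimes> b"] a' b' by simp
  then show ?thesis using assms unfolding cyc_adj_def by simp
qed

lemma (in group) cyc_adj_if_commute_prime_ord:
  assumes "a \<in> carrier G" "b \<in> carrier G" "a \<otimes> b = b \<otimes> a"
    and "Factorial_Ring.prime (ord a)" "Factorial_Ring.prime (ord b)" "ord a \<noteq> ord b"
  shows "cyc_adj G a b"
proof -
  have "a \<noteq> \<one>" "b \<noteq> \<one>" using assms by (metis ord_eq_1 not_prime_1)+
  then show ?thesis
    using assms cyc_adj_if_commute_coprime_ord primes_coprime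
    unfolding cyc_vertices_def by blast
qed

lemma (in group) cyc_adj_pow:
  assumes "x \<in> cyc_vertices G" "x [^] (k::nat) \<in> cyc_vertices G" "x [^] k \<noteq> x"
  shows "cyc_adj G x (x [^] k)"
proof -
  have x: "x \<in> carrier G" using assms(1) by (simp add: cyc_vertices_def)
  have "x [^] int k \<in> generate G {x}" using generate_pow[OF x] by blast
  then have "x [^] k \<in> generate G {x}" by (simp add: int_pow_int)
  then have "cyclic_group (subgroup_generated G {x, x [^] k})"
    using cyclic_group_subgroup_generatedI[of "{x, x [^] k}" x] x
    by (simp add: generate.incl)
  then show ?thesis using assms unfolding cyc_adj_def by simp
qed

lemma cyc_adj_sym: "cyc_adj G x y \<Longrightarrow> cyc_adj G y x"
  unfolding cyc_adj_def by (auto simp: insert_commute)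

lemma cyc_walk_iff_successively:
  "cyc_walk G xs \<longleftrightarrow> xs \<noteq> [] \<and> set xs \<subseteq> cyc_vertices G \<and> successively (cyc_adj G) xs"
  unfolding cyc_walk_def successively_iff_nth ..

lemma cyc_dist_le_refl: "x \<in> cyc_vertices G \<Longrightarrow> cyc_dist_le G n x x"
  unfolding cyc_dist_le_def cyc_walk_iff_successively by (intro exI[of _ "[x]"]) simp

lemma cyc_dist_le_if_adj:
  assumes "cyc_adj G x y"
  shows "cyc_dist_le G 1 x y"
proof -
  have "x \<in> cyc_vertices G" "y \<in> cyc_vertices G" using assms by (simp_all add: cyc_adj_def)
  with assms show ?thesis
    unfolding cyc_dist_le_def cyc_walk_iff_successively by (intro exI[of _ "[x, y]"]) simp
qed

lemma cyc_dist_le_mono: "cyc_dist_le G m x y \<Longrightarrow> m \<le> n \<Longrightarrow> cyc_dist_le G n x y"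
  unfolding cyc_dist_le_def by fastforce

lemma cyc_dist_le_sym:
  assumes "cyc_dist_le G n x y"
  shows "cyc_dist_le G n y x"
proof -
  obtain xs where xs: "cyc_walk G xs" "hd xs = x" "last xs = y" "length xs \<le> Suc n"
    using assms unfolding cyc_dist_le_def by blast
  have "successively (cyc_adj G) xs" using xs(1) by (simp add: cyc_walk_iff_successively)
  then have "successively (\<lambda>a b. cyc_adj G b a) xs"
    by (rule successively_mono) (rule cyc_adj_sym)
  then have "cyc_walk G (rev xs)" using xs(1) by (simp add: cyc_walk_iff_successively)
  then show ?thesis
    using xs unfolding cyc_dist_le_def by (intro exI[of _ "rev xs"]) (simp add: hd_rev last_rev)
qed

lemma cyc_dist_le_trans:
  assumes "cyc_dist_le G m x y" "cyc_dist_le G n y w"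
  shows "cyc_dist_le G (m + n) x w"
proof -
  obtain xs where xs: "cyc_walk G xs" "hd xs = x" "last xs = y" "length xs \<le> Suc m"
    using assms(1) unfolding cyc_dist_le_def by blast
  obtain ys where ys: "cyc_walk G (y # ys)" "last (y # ys) = w" "length ys \<le> n"
  proof -
    obtain zs where zs: "cyc_walk G zs" "hd zs = y" "last zs = w" "length zs \<le> Suc n"
      using assms(2) unfolding cyc_dist_le_def by blast
    then have "zs = y # tl zs" by (cases zs) (auto simp: cyc_walk_def)
    with zs show thesis using that[of "tl zs"] by simp
  qed
  have "cyc_walk G (xs @ ys)"
    using xs(1,3) ys(1)
    by (auto simp: cyc_walk_iff_successively successively_append_iff successively_Cons)
  moreover have "last (xs @ ys) = w" using xs(3) ys(2) by (simp split: if_splits)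
  moreover have "hd (xs @ ys) = x" using xs(1,2) by (simp add: cyc_walk_def)
  moreover have "length (xs @ ys) \<le> Suc (m + n)" using xs(4) ys(3) by simp
  ultimately show ?thesis unfolding cyc_dist_le_def by blast
qed

lemma (in group) cyc_dist_le_1_prime_ord_pow:
  assumes "finite (carrier G)" "x \<in> cyc_vertices G"
  obtains y where "y \<in> cyc_vertices G" "Factorial_Ring.prime (ord y)" "cyc_dist_le G 1 x y"
proof -
  have x: "x \<in> carrier G" "x \<noteq> \<one>" using assms(2) by (auto simp: cyc_vertices_def)
  then have "ord x \<noteq> 1" using ord_eq_1 by blast
  then obtain q where q: "Factorial_Ring.prime q" "q dvd ord x" using prime_factor_nat by blast
  from q(2) obtain d where d: "ord x = q * d" by (rule dvdE)
  have "d \<noteq> 0" using d ord_ge_1[OF assms(1) x(1)] by auto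
  then have "ord (x [^] d) = ord x div d" using ord_pow[OF x(1), of d] d by simp
  also have "\<dots> = q" using d \<open>d \<noteq> 0\<close> by simp
  finally have ord_pow_d: "ord (x [^] d) = q" .
  then have "x [^] d \<noteq> \<one>" using q(1) by (metis ord_id not_prime_1)
  then have pow_d: "x [^] d \<in> cyc_vertices G" using x(1) by (simp add: cyc_vertices_def)
  have "cyc_dist_le G 1 x (x [^] d)"
  proof (cases "x [^] d = x")
    case True
    then show ?thesis using cyc_dist_le_refl[OF assms(2)] by simp
  next
    case False
    show ?thesis by (rule cyc_dist_le_if_adj[OF cyc_adj_pow[OF assms(2) pow_d False]])
  qed
  then show ?thesis using that pow_d ord_pow_d q(1) by blast
qed

lemma (in group) cyc_dist_le_3_central_ord_p:
  assumes fin: "finite (carrier G)" and p: "Factorial_Ring.prime p"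
    and z: "z \<in> group_center G" "ord z = p"
    and centralizers: "\<And>y. y \<in> carrier G \<Longrightarrow> ord y = p \<Longrightarrow>
      \<not> is_p_group_set p (group_centralizer G y)"
    and x: "x \<in> cyc_vertices G"
  shows "cyc_dist_le G 3 x z"
proof -
  have zG: "z \<in> carrier G" using z(1) by (simp add: group_center_def)
  have near_z: "cyc_dist_le G 1 w z"
    if w: "w \<in> carrier G" "Factorial_Ring.prime (ord w)" "ord w \<noteq> p" for w
  proof -
    have "w \<otimes> z = z \<otimes> w" using z(1) w(1) by (simp add: group_center_def)
    then have "cyc_adj G w z"
      using cyc_adj_if_commute_prime_ord[OF w(1) zG _ w(2)] w(3) z(2) p by simp
    then show ?thesis by (rule cyc_dist_le_if_adj)
  qed
  obtain y where y: "y \<in> cyc_vertices G" "Factorial_Ring.prime (ord y)" "cyc_dist_le G 1 x y"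
    using cyc_dist_le_1_prime_ord_pow[OF fin x] .
  have yG: "y \<in> carrier G" using y(1) by (simp add: cyc_vertices_def)
  show ?thesis
  proof (cases "ord y = p")
    case False
    have "cyc_dist_le G (1 + 1) x z"
      using cyc_dist_le_trans[OF y(3) near_z[OF yG y(2) False]] .
    then show ?thesis by (rule cyc_dist_le_mono) simp
  next
    case True
    have "finite (group_centralizer G y)"
      using finite_subset[OF _ fin] by (auto simp: group_centralizer_def)
    then obtain w
      where w: "w \<in> group_centralizer G y" "Factorial_Ring.prime (ord w)" "ord w \<noteq> p"
      using subgroup_exists_prime_ord_ne[OF subgroup_group_centralizer[OF yG] _ p
          centralizers[OF yG True]] by blast
    have wG: "w \<in> carrier G" and "y \<otimes> w = w \<otimes> y"
      using w(1) by (auto simp: group_centralizer_def)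
    then have "cyc_adj G y w"
      using cyc_adj_if_commute_prime_ord[OF yG wG _ y(2) w(2)] w(3) True by simp
    then have "cyc_dist_le G 1 y w" by (rule cyc_dist_le_if_adj)
    from cyc_dist_le_trans[OF cyc_dist_le_trans[OF y(3) this] near_z[OF wG w(2,3)]]
    show ?thesis by (simp add: numeral_3_eq_3)
  qed
qed

theorem lemma3p2:
  fixes G (structure) and p :: nat
  assumes "group G" and "finite (carrier G)" and "Factorial_Ring.prime p"
    and "group_center G \<noteq> {\<one>}"
    and "is_p_group_set p (group_center G)"
    and "\<And>x. x \<in> carrier G \<Longrightarrow> group.ord G x = p \<Longrightarrow>
           \<not> is_p_group_set p (group_centralizer G x)"
  shows "cyc_connected G \<and> cyc_diam_le G 6"
proof -
  interpret group G by fact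
  obtain z where z: "z \<in> group_center G" "ord z = p"
    using p_subgroup_exists_ord_eq[OF subgroup_group_center assms(5,4,3)] .
  have "cyc_dist_le G 6 x y" if "x \<in> cyc_vertices G" "y \<in> cyc_vertices G" for x y
  proof -
    have "cyc_dist_le G 3 x z" "cyc_dist_le G 3 y z"
      using cyc_dist_le_3_central_ord_p[OF assms(2,3) z assms(6)] that by auto
    from cyc_dist_le_trans[OF this(1) cyc_dist_le_sym[OF this(2)]] show ?thesis by simp
  qed
  then show ?thesis unfolding cyc_connected_def cyc_diam_le_def by blast
qed

end
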